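(* Let $X\sim\mu=p^{\mathbb{Z}^d}$, $Y\sim\nu=q^{\mathbb{Z}^d}$ and let $\phi:X\to Y$ be a finitary homomorphism with coding radius $R_\phi$. Let $n,N\in\mathbb{N}$ with $N\ge 2n+1$, let $\hat X\sim p^{\mathbb{T}_N^d}$ and $\hat Y=\hat\phi^n(\hat X)$ be the $(\mathbb{T}_N^d,n)$-modeling of $\phi$, and let $\mathcal{J}_{N,n}^c=\{u\in\mathbb{T}_N^d:\hat\phi^n(\hat X)_u=*\}$. Then: (1) For every $u\in\mathbb{T}_N^d$, $\mathbf{P}[\hat\phi^n(\hat X)_u=*]=\mathbf{P}[R_\phi>n]$, and $\mathbf{E}[|\mathcal{J}_{N,n}^c|]=N^d\,\mathbf{P}[R_\phi>n]$. In particular, if $\mathbf{P}[R_\phi>n]=o(n^{-d\alpha})$ for some $\alpha>0$, then there is a sequence $\delta_N\searrow0$ such that $\mathbf{E}[|\mathcal{J}^c_{N,\lfloor\delta_N N\rfloor}|]=o(N^{d(1-\alpha)})$. (2) If $\mathcal{S}\subset\mathbb{Z}^d$ satisfies $\bigcup_{s\in\mathcal{S}}[s-n,s+n]^d\subseteq u_0+[1,N]^d$ for some $u_0\in\mathbb{Z}^d$, then there exists a coupling $\lambda_{\mathcal{S}}$ of $(\hat\phi^n(\hat X)_u)_{u\in\mathcal{S}}$ (indices taken mod $N$) with $(Y_u)_{u\in\mathcal{S}}\sim q^{\mathcal{S}}$ such that for every $u\in\mathcal{S}$, $\{\hat\phi^n(\hat X)_u\ne Y_u\}=\{\hat\phi^n(\hat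 X)_u=*\}$ (up to null sets).
   Context: $A,B$ are finite alphabets, $p,q$ probability vectors on $A,B$, $\mu=p^{\mathbb{Z}^d}$, $\nu=q^{\mathbb{Z}^d}$. A homomorphism $\phi:X\to Y$ is a measurable shift-commuting map $A^{\mathbb{Z}^d}\to B^{\mathbb{Z}^d}$ with $\phi_*\mu=\nu$. Its coding radius is $R_\phi(x)=\min\{n\in\mathbb{N}\cup\{\infty\}:\text{for }\mu\text{-a.e. }a,\ a|_{[-n,n]^d}=x|_{[-n,n]^d}\Rightarrow\phi(a)_0=\phi(x)_0\}$; $\phi$ is finitary if $R_\phi<\infty$ a.s. Let $*\notin B$. For $n\in\mathbb{N}$ define $\phi^n_0(x)=\phi(x)_0$ if $R_\phi(x)\le n$ and $\phi^n_0(x)=*$ otherwise; up to a $\mu$-null set, $\phi^n_0(x)$ is a function of $x|_{[-n,n]^d}$. Let $\mathbb{T}_N^d=\mathbb{Z}^d/(N\mathbb{Z})^d$; for $\hat x\in A^{\mathbb{T}_N^d}$ and $u\in\mathbb{Z}^d$ write $\hat x_u$ for $\hat x_{u\bmod N}$. For $N\ge 2n+1$, define $\hat\phi^n:A^{\mathbb{T}_N^d}\to(B\cup\{*\})^{\mathbb{T}_N^d}$ by letting $\hat\phi^n(\hat x)_u$ be the (a.e. unique) value of $\phi^n_0(T_{-u}x)$ for $x\in A^{\mathbb{Z}^d}$ agreeing with the $N$-periodic extension of $\hat x$ (i.e. the value of $\phi^n_0$ evaluated on the periodic extension of $T_{-u}\hat x$, where $(T_{-u}\hat x)_v=\hat x_{v+u}$).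 The $(\mathbb{T}_N^d,n)$-modeling of $\phi$ is the map $\hat\phi^n:\hat X\mapsto\hat Y:=\hat\phi^n(\hat X)$ with $\hat X\sim p^{\mathbb{T}_N^d}$. *)

theory Defs
  imports "HOL-Probability.Probability" "HOL-Probability.Product_PMF" "HOL-Library.Landau_Symbols"
begin

text \<open>Sites of Z^d are functions 'd \<Rightarrow> int, with d = CARD('d) (a finite index type).
  Configurations are functions from sites to a finite alphabet.\<close>

definition shift :: "('d \<Rightarrow> int) \<Rightarrow> (('d \<Rightarrow> int) \<Rightarrow> 'x) \<Rightarrow> (('d \<Rightarrow> int) \<Rightarrow> 'x)" where
  "shift w x = (\<lambda>v. x (\<lambda>i. v i - w i))"

definition bshift :: "'a pmf \<Rightarrow> (('d \<Rightarrow> int) \<Rightarrow> 'a) measure" where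
  "bshift p = PiM UNIV (\<lambda>_. measure_pmf p)"

definition homomorphism ::
  "'a pmf \<Rightarrow> 'b pmf \<Rightarrow> ((('d \<Rightarrow> int) \<Rightarrow> 'a) \<Rightarrow> (('d \<Rightarrow> int) \<Rightarrow> 'b)) \<Rightarrow> bool" where
  "homomorphism p q \<phi> \<longleftrightarrow>
     \<phi> \<in> measurable (bshift p) (bshift q) \<and>
     (\<forall>w x. \<phi> (shift w x) = shift w (\<phi> x)) \<and>
     distr (bshift p) (bshift q) \<phi> = bshift q"

definition coding_radius ::
  "'a pmf \<Rightarrow> ((('d \<Rightarrow> int) \<Rightarrow> 'a) \<Rightarrow> (('d \<Rightarrow> int) \<Rightarrow> 'b)) \<Rightarrow> (('d \<Rightarrow> int) \<Rightarrow> 'a) \<Rightarrow> enat" where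
  "coding_radius p \<phi> x = (LEAST n::enat.
     AE a in bshift p. (\<forall>v. (\<forall>i. enat (nat \<bar>v i\<bar>) \<le> n) \<longrightarrow> a v = x v)
                       \<longrightarrow> \<phi> a (\<lambda>_. 0) = \<phi> x (\<lambda>_. 0))"

definition finitary ::
  "'a pmf \<Rightarrow> ((('d \<Rightarrow> int) \<Rightarrow> 'a) \<Rightarrow> (('d \<Rightarrow> int) \<Rightarrow> 'b)) \<Rightarrow> bool" where
  "finitary p \<phi> \<longleftrightarrow> (AE x in bshift p. coding_radius p \<phi> x < \<infinity>)"

definition box :: "nat \<Rightarrow> ('d \<Rightarrow> int) set" where
  "box n = {v. \<forall>i. \<bar>v i\<bar> \<le> int n}"

text \<open>phi^n_0, with * represented by None.\<close>
definition phi_n ::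
  "'a pmf \<Rightarrow> ((('d \<Rightarrow> int) \<Rightarrow> 'a) \<Rightarrow> (('d \<Rightarrow> int) \<Rightarrow> 'b)) \<Rightarrow> nat \<Rightarrow> (('d \<Rightarrow> int) \<Rightarrow> 'a) \<Rightarrow> 'b option" where
  "phi_n p \<phi> n x = (if coding_radius p \<phi> x \<le> enat n then Some (\<phi> x (\<lambda>_. 0)) else None)"

definition block_rule ::
  "'a pmf \<Rightarrow> ((('d \<Rightarrow> int) \<Rightarrow> 'a) \<Rightarrow> (('d \<Rightarrow> int) \<Rightarrow> 'b)) \<Rightarrow> nat \<Rightarrow> (('d \<Rightarrow> int) \<Rightarrow> 'a) \<Rightarrow> 'b option" where
  "block_rule p \<phi> n = (SOME F.
      (\<forall>x y. (\<forall>v\<in>box n. x v = y v) \<longrightarrow> F x = F y) \<and>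
      (AE x in bshift p. F x = phi_n p \<phi> n x))"

text \<open>The discrete torus T_N^d, represented by the residues {0..N-1}^d.\<close>
definition torus :: "nat \<Rightarrow> ('d \<Rightarrow> int) set" where
  "torus N = {u. \<forall>i. 0 \<le> u i \<and> u i < int N}"

definition torus_pmf :: "nat \<Rightarrow> 'a pmf \<Rightarrow> (('d \<Rightarrow> int) \<Rightarrow> 'a) pmf" where
  "torus_pmf N p = Pi_pmf (torus N) undefined (\<lambda>_. p)"

text \<open>The (T_N^d,n)-modeling: value at u \<in> Z^d (indices taken mod N) of hat-phi^n applied to xh.\<close>
definition torus_model ::
  "'a pmf \<Rightarrow> ((('d \<Rightarrow> int) \<Rightarrow> 'a) \<Rightarrow> (('d \<Rightarrow> int) \<Rightarrow> 'b)) \<Rightarrow> nat \<Rightarrow> nat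
     \<Rightarrow> (('d \<Rightarrow> int) \<Rightarrow> 'a) \<Rightarrow> ('d \<Rightarrow> int) \<Rightarrow> 'b option" where
  "torus_model p \<phi> n N xh u = block_rule p \<phi> n (\<lambda>v. xh (\<lambda>i. (v i + u i) mod int N))"

definition prob_R_gt ::
  "'a pmf \<Rightarrow> ((('d \<Rightarrow> int) \<Rightarrow> 'a) \<Rightarrow> (('d \<Rightarrow> int) \<Rightarrow> 'b)) \<Rightarrow> nat \<Rightarrow> real" where
  "prob_R_gt p \<phi> n = measure (bshift p) {x. enat n < coding_radius p \<phi> x}"

definition exp_Jc ::
  "'a pmf \<Rightarrow> ((('d \<Rightarrow> int) \<Rightarrow> 'a) \<Rightarrow> (('d \<Rightarrow> int) \<Rightarrow> 'b)) \<Rightarrow> nat \<Rightarrow> nat \<Rightarrow> real" where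
  "exp_Jc p \<phi> N n = measure_pmf.expectation (torus_pmf N p)
     (\<lambda>xh. real (card {u \<in> torus N. torus_model p \<phi> n N xh u = None}))"

end

theory Submission
  imports Defs
begin

(* The block rule at a site u reads only the box u + [-n,n]^d. If these boxes lie in a window of
   side N, reduction mod N is a bijection from the window onto the torus, so the periodically
   extended i.i.d. field on the torus, seen through the window, is again i.i.d. Hence the torus
   modeling on S has the same law as the infinite-volume block rule on S, which almost surely is
   phi truncated at coding radius n. Shift invariance of the Bernoulli measure turns P[* at u] into
   P[R > n], and linearity of expectation gives E|J^c|. The coupling is the joint law of truncated
   and untruncated phi on S under one infinite-volume configuration. For the little-o bound, if g
   is a decreasing majorant of P[R > m] m^c with c = d alpha, the scale
   delta_N = max (g(sqrt N)^(1/(2c))) (2/sqrt(N+1)) vanishes so slowly that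
   P[R > delta_N N] N^c <= 2^c sqrt(g(sqrt N)). *)

section \<open>The Bernoulli measure on configurations\<close>

lemma space_bshift [simp]: "space (bshift p) = UNIV"
  by (simp add: bshift_def space_PiM)

lemma sets_bshift: "sets (bshift p) = sets (PiM UNIV (\<lambda>_. count_space UNIV))"
  unfolding bshift_def by (intro sets_PiM_cong) simp_all

lemma prob_space_bshift: "prob_space (bshift p)"
  unfolding bshift_def by (intro prob_space_PiM prob_space_measure_pmf)

lemma measurable_restrict_bshift:
  fixes p :: "'a::finite pmf" and W :: "('d \<Rightarrow> int) set"
  assumes "finite W"
  shows "(\<lambda>x. restrict x W) \<in> bshift p \<rightarrow>\<^sub>M count_space UNIV"
proof -
  have "(\<lambda>x. restrict x W) \<in> PiM UNIV (\<lambda>_. count_space (UNIV::'a set)) \<rightarrow>\<^sub>M PiM W (\<lambda>_. count_space UNIV)"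
    by (rule measurable_restrict_subset) simp
  also have "PiM W (\<lambda>_. count_space (UNIV::'a set)) = count_space (PiE W (\<lambda>_. UNIV))"
    using assms by (intro count_space_PiM_finite) simp_all
  also have "\<dots> = restrict_space (count_space UNIV) (PiE W (\<lambda>_. UNIV))"
    by (simp add: restrict_count_space)
  finally have "(\<lambda>x. restrict x W) \<in> PiM UNIV (\<lambda>_. count_space (UNIV::'a set)) \<rightarrow>\<^sub>M count_space UNIV"
    by (rule measurable_restrict_space2_iff[THEN iffD1, THEN conjunct1])
  then show ?thesis
    by (subst measurable_cong_sets[OF sets_bshift refl])
qed

lemma distr_restrict_bshift:
  fixes p :: "'a::finite pmf" and W :: "('d \<Rightarrow> int) set"
  assumes W: "finite W"
  shows "distr (bshift p) (count_space UNIV) (\<lambda>x. restrict x W) = measure_pmf (Pi_pmf W undefined (\<lambda>_. p))"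
proof (rule measure_eqI_countable_AE[where \<Omega> = "PiE W (\<lambda>_. UNIV)"])
  interpret product_prob_space "\<lambda>_. measure_pmf p" UNIV
    by (intro product_prob_spaceI prob_space_measure_pmf)
  show "AE x in distr (bshift p) (count_space UNIV) (\<lambda>x. restrict x W). x \<in> PiE W (\<lambda>_. UNIV)"
    by (subst AE_distr_iff[OF measurable_restrict_bshift[OF W]]) auto
  show "AE x in measure_pmf (Pi_pmf W undefined (\<lambda>_. p)). x \<in> PiE W (\<lambda>_. UNIV)"
    using set_Pi_pmf_subset[OF W, of undefined "\<lambda>_. p"]
    by (intro AE_pmfI) (auto simp: PiE_iff extensional_def)
  show "countable (PiE W (\<lambda>_. UNIV::'a set))"
    using W by (intro countable_finite finite_PiE) auto
  fix f assume f: "f \<in> PiE W (\<lambda>_. UNIV::'a set)"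
  have cylinder: "(\<lambda>x. restrict x W) -` {f} \<inter> space (bshift p) =
      prod_emb UNIV (\<lambda>_. measure_pmf p) W (PiE W (\<lambda>v. {f v}))"
    using f by (auto simp: prod_emb_def bshift_def space_PiM PiE_iff extensional_def fun_eq_iff)
  have "emeasure (distr (bshift p) (count_space UNIV) (\<lambda>x. restrict x W)) {f}
      = emeasure (bshift p) ((\<lambda>x. restrict x W) -` {f} \<inter> space (bshift p))"
    by (rule emeasure_distr[OF measurable_restrict_bshift[OF W]]) auto
  also have "\<dots> = (\<Prod>v\<in>W. emeasure (measure_pmf p) {f v})"
    unfolding cylinder unfolding bshift_def using W by (intro emeasure_PiM_emb) auto
  also have "\<dots> = emeasure (measure_pmf (Pi_pmf W undefined (\<lambda>_. p))) {f}"
    using f W by (simp add: emeasure_pmf_single pmf_Pi PiE_iff extensional_def prod_ennreal)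
  finally show "emeasure (distr (bshift p) (count_space UNIV) (\<lambda>x. restrict x W)) {f} =
      emeasure (measure_pmf (Pi_pmf W undefined (\<lambda>_. p))) {f}" .
qed auto

lemma distr_local_bshift:
  fixes p :: "'a::finite pmf" and W :: "('d \<Rightarrow> int) set"
  assumes W: "finite W"
  shows "distr (bshift p) (count_space UNIV) (\<lambda>x. H (restrict x W))
       = measure_pmf (map_pmf H (Pi_pmf W undefined (\<lambda>_. p)))"
  using distr_distr[OF measurable_count_space[of H] measurable_restrict_bshift[OF W]]
  by (simp add: o_def distr_restrict_bshift[OF W] map_pmf_rep_eq)

lemma measurable_shift_bshift: "shift w \<in> bshift p \<rightarrow>\<^sub>M bshift p"
  unfolding shift_def bshift_def
  by (rule measurable_PiM_single'[where f="\<lambda>v x. x (\<lambda>i. v i - w i)", simplified])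
     (auto simp: space_PiM)

lemma distr_shift_bshift:
  fixes p :: "'a pmf" and w :: "'d \<Rightarrow> int"
  shows "distr (bshift p) (bshift p) (shift w) = bshift p"
proof -
  interpret product_prob_space "\<lambda>_. measure_pmf p" "UNIV :: ('d \<Rightarrow> int) set"
    by (intro product_prob_spaceI prob_space_measure_pmf)
  let ?M = "PiM UNIV (\<lambda>_. measure_pmf p)"
  show ?thesis unfolding bshift_def
  proof (rule measure_eqI_PiM_infinite)
    show "finite_measure (distr ?M ?M (shift w))"
      using prob_space.prob_space_distr[OF P.prob_space_axioms measurable_shift_bshift[unfolded bshift_def]]
      by (simp add: prob_space_def)
  next
    fix A :: "('d \<Rightarrow> int) \<Rightarrow> 'a set" and J :: "('d \<Rightarrow> int) set"
    assume J: "finite J" "J \<subseteq> UNIV"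
    let ?E = "prod_emb UNIV (\<lambda>_. measure_pmf p) J (PiE J A)"
    define t where "t j = (\<lambda>i. j i - w i)" for j :: "'d \<Rightarrow> int"
    have inj: "inj t" by (rule injI) (auto simp: t_def fun_eq_iff)
    have "shift w -` ?E \<inter> space ?M
       = prod_emb UNIV (\<lambda>_. measure_pmf p) (t ` J) (PiE (t ` J) (\<lambda>j. A (\<lambda>i. j i + w i)))"
      by (auto simp: prod_emb_iff shift_def space_PiM PiE_iff t_def extensional_def)
    then have "emeasure (distr ?M ?M (shift w)) ?E = (\<Prod>j\<in>t ` J. emeasure (measure_pmf p) (A (\<lambda>i. j i + w i)))"
      using J by (simp add: emeasure_distr[OF measurable_shift_bshift[unfolded bshift_def]]
          sets_PiM_I emeasure_PiM_emb)
    also have "\<dots> = (\<Prod>j\<in>J. emeasure (measure_pmf p) (A j))"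
      by (subst prod.reindex[OF inj_on_subset[OF inj subset_UNIV]]) (simp add: t_def)
    also have "\<dots> = emeasure ?M ?E"
      using J by (intro emeasure_PiM_emb[symmetric]) auto
    finally show "emeasure (distr ?M ?M (shift w)) ?E = emeasure ?M ?E" .
  qed simp_all
qed

lemma AE_bshift_shift:
  assumes "AE x in bshift p. P x"
  shows "AE x in bshift p. P (shift w x)"
  by (rule AE_distrD[OF measurable_shift_bshift]) (unfold distr_shift_bshift, rule assms)

lemma measure_bshift_shift_vimage:
  assumes "A \<in> sets (bshift p)"
  shows "measure (bshift p) (shift w -` A) = measure (bshift p) A"
  using measure_distr[OF measurable_shift_bshift assms, of w] by (simp add: distr_shift_bshift)

section \<open>Coding radius and the block rule\<close>

definition forces ::
  "'a pmf \<Rightarrow> ((('d \<Rightarrow> int) \<Rightarrow> 'a) \<Rightarrow> (('d \<Rightarrow> int) \<Rightarrow> 'b)) \<Rightarrow> nat \<Rightarrow> (('d \<Rightarrow> int) \<Rightarrow> 'a) \<Rightarrow> 'b \<Rightarrow> bool"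
  where "forces p \<phi> n w b \<longleftrightarrow> (AE a in bshift p. restrict a (box n) = w \<longrightarrow> \<phi> a (\<lambda>_. 0) = b)"

lemma Least_le_iff_upward_closed:
  fixes n :: "'a::wellorder"
  assumes "Q m\<^sub>0" and upward: "\<And>m m'. Q m \<Longrightarrow> m \<le> m' \<Longrightarrow> Q m'"
  shows "(LEAST m. Q m) \<le> n \<longleftrightarrow> Q n"
  using LeastI[of Q, OF assms(1)] upward Least_le[of Q n] by blast

lemma finite_box: "finite (box n :: ('d::finite \<Rightarrow> int) set)"
proof -
  have "box n = PiE UNIV (\<lambda>_::'d. {- int n..int n})"
    by (auto simp: box_def PiE_iff abs_le_iff minus_le_iff)
  then show ?thesis by (simp add: finite_PiE)
qed

lemma coding_radius_le_iff:
  fixes p :: "'a pmf" and \<phi> :: "(('d \<Rightarrow> int) \<Rightarrow> 'a) \<Rightarrow> (('d \<Rightarrow> int) \<Rightarrow> 'b)"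
  shows "coding_radius p \<phi> x \<le> enat n \<longleftrightarrow> forces p \<phi> n (restrict x (box n)) (\<phi> x (\<lambda>_. 0))"
proof -
  define Q where "Q m \<longleftrightarrow> (AE a in bshift p. (\<forall>v. (\<forall>i. enat (nat \<bar>v i\<bar>) \<le> m) \<longrightarrow> a v = x v)
      \<longrightarrow> \<phi> a (\<lambda>_. 0) = \<phi> x (\<lambda>_. 0))" for m
  have "Q \<infinity>"
    by (auto simp: Q_def fun_eq_iff[symmetric])
  moreover have "Q m'" if "Q m" "m \<le> m'" for m m'
    using that(1) unfolding Q_def by (elim eventually_mono) (use that(2) order_trans in blast)
  moreover have "Q (enat n) \<longleftrightarrow> forces p \<phi> n (restrict x (box n)) (\<phi> x (\<lambda>_. 0))"
  proof -
    have "(\<forall>v. (\<forall>i. enat (nat \<bar>v i\<bar>) \<le> enat n) \<longrightarrow> a v = x v) \<longleftrightarrow> restrict a (box n) = restrict x (box n)"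
      for a :: "('d \<Rightarrow> int) \<Rightarrow> 'a"
      by (auto simp: box_def fun_eq_iff nat_le_iff)
    then show ?thesis by (simp add: Q_def forces_def)
  qed
  ultimately show ?thesis
    unfolding coding_radius_def Q_def[symmetric] by (simp add: Least_le_iff_upward_closed)
qed

lemma measurable_site_value:
  assumes "\<phi> \<in> bshift p \<rightarrow>\<^sub>M bshift q"
  shows "(\<lambda>x. \<phi> x u) \<in> bshift p \<rightarrow>\<^sub>M count_space UNIV"
proof -
  have "(\<lambda>x. \<phi> x u) \<in> bshift p \<rightarrow>\<^sub>M measure_pmf q"
    using measurable_compose[OF assms[unfolded bshift_def] measurable_component_singleton[OF UNIV_I]]
    by (simp add: bshift_def)
  then show ?thesis by (simp add: measurable_cong_sets)
qed

lemma sets_coding_radius_gt: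
  fixes p :: "'a::finite pmf" and q :: "'b::finite pmf"
    and \<phi> :: "(('d::finite \<Rightarrow> int) \<Rightarrow> 'a) \<Rightarrow> (('d \<Rightarrow> int) \<Rightarrow> 'b)"
  assumes \<phi>: "\<phi> \<in> bshift p \<rightarrow>\<^sub>M bshift q"
  shows "{x. enat n < coding_radius p \<phi> x} \<in> sets (bshift p)"
proof -
  have "{x. coding_radius p \<phi> x \<le> enat n} =
      (\<Union>b. (\<lambda>x. restrict x (box n)) -` {w. forces p \<phi> n w b} \<inter> space (bshift p)
             \<inter> ((\<lambda>x. \<phi> x (\<lambda>_. 0)) -` {b} \<inter> space (bshift p)))"
    by (auto simp: coding_radius_le_iff)
  also have "\<dots> \<in> sets (bshift p)"
    using measurable_restrict_bshift[OF finite_box] measurable_site_value[OF \<phi>]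
    by (intro sets.finite_UN sets.Int measurable_sets) auto
  finally have "space (bshift p) - {x. coding_radius p \<phi> x \<le> enat n} \<in> sets (bshift p)"
    by blast
  then show ?thesis by (simp add: set_diff_eq not_le)
qed

lemma exists_local_version_phi_n:
  fixes p :: "'a::finite pmf"
    and \<phi> :: "(('d::finite \<Rightarrow> int) \<Rightarrow> 'a) \<Rightarrow> (('d \<Rightarrow> int) \<Rightarrow> 'b::finite)"
  shows "\<exists>F. (\<forall>x y. (\<forall>v\<in>box n. x v = y v) \<longrightarrow> F x = F y) \<and>
      (AE x in bshift p. F x = phi_n p \<phi> n x)"
proof -
  define F where "F x = (if \<exists>b. forces p \<phi> n (restrict x (box n)) b
      then Some (SOME b. forces p \<phi> n (restrict x (box n)) b) else None)" for x
  \<comment> \<open>A pattern forcing two different values is a null event, so the choice made by SOME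
      is irrelevant almost surely.\<close>
  define forcing_pairs where "forcing_pairs =
    {(w, b). w \<in> PiE (box n) (\<lambda>_. UNIV :: 'a set) \<and> forces p \<phi> n w b}"
  have "finite forcing_pairs"
    by (rule finite_subset[of _ "PiE (box n) (\<lambda>_. UNIV :: 'a set) \<times> (UNIV :: 'b set)"])
       (auto simp: forcing_pairs_def intro!: finite_PiE finite_box)
  then have "AE a in bshift p. \<forall>(w, b) \<in> forcing_pairs. restrict a (box n) = w \<longrightarrow> \<phi> a (\<lambda>_. 0) = b"
    by (rule AE_finite_allI) (auto simp: forcing_pairs_def forces_def)
  then have "AE a in bshift p. F a = phi_n p \<phi> n a"
  proof (rule AE_mp, intro AE_I2 impI)
    fix a assume forced: "\<forall>(w, b) \<in> forcing_pairs. restrict a (box n) = w \<longrightarrow> \<phi> a (\<lambda>_. 0) = b"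
    show "F a = phi_n p \<phi> n a"
    proof (cases "\<exists>b. forces p \<phi> n (restrict a (box n)) b")
      case True
      then have "forces p \<phi> n (restrict a (box n)) (SOME b. forces p \<phi> n (restrict a (box n)) b)"
        by (rule someI_ex)
      with forced show ?thesis
        by (auto simp: F_def phi_n_def coding_radius_le_iff forcing_pairs_def)
    qed (auto simp: F_def phi_n_def coding_radius_le_iff)
  qed
  moreover have "F x = F y" if "\<forall>v\<in>box n. x v = y v" for x y
    using that by (simp add: F_def restrict_def cong: if_cong)
  ultimately show ?thesis by blast
qed

lemma
  fixes p :: "'a::finite pmf"
    and \<phi> :: "(('d::finite \<Rightarrow> int) \<Rightarrow> 'a) \<Rightarrow> (('d \<Rightarrow> int) \<Rightarrow> 'b::finite)"
  shows block_rule_local: "(\<And>v. v \<in> box n \<Longrightarrow> x v = y v) \<Longrightarrow> block_rule p \<phi> n x = block_rule p \<phi> n y"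
    and AE_block_rule_eq_phi_n: "AE x in bshift p. block_rule p \<phi> n x = phi_n p \<phi> n x"
  using someI_ex[OF exists_local_version_phi_n[of n p \<phi>], folded block_rule_def] by blast+

lemma sets_block_rule_None:
  fixes p :: "'a::finite pmf"
    and \<phi> :: "(('d::finite \<Rightarrow> int) \<Rightarrow> 'a) \<Rightarrow> (('d \<Rightarrow> int) \<Rightarrow> 'b::finite)"
  shows "{x. block_rule p \<phi> n x = None} \<in> sets (bshift p)"
proof -
  have "block_rule p \<phi> n (restrict x (box n)) = block_rule p \<phi> n x" for x
    by (rule block_rule_local) simp
  then have "{x. block_rule p \<phi> n x = None} =
      (\<lambda>x. restrict x (box n)) -` {w. block_rule p \<phi> n w = None} \<inter> space (bshift p)"
    by auto
  also have "\<dots> \<in> sets (bshift p)"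
    by (rule measurable_sets[OF measurable_restrict_bshift[OF finite_box]]) simp
  finally show ?thesis .
qed

lemma measure_block_rule_shift_None:
  fixes p :: "'a::finite pmf" and q :: "'b::finite pmf"
    and \<phi> :: "(('d::finite \<Rightarrow> int) \<Rightarrow> 'a) \<Rightarrow> (('d \<Rightarrow> int) \<Rightarrow> 'b)"
  assumes \<phi>: "\<phi> \<in> bshift p \<rightarrow>\<^sub>M bshift q"
  shows "measure (bshift p) {x. block_rule p \<phi> n (shift w x) = None} = prob_R_gt p \<phi> n"
proof -
  have "measure (bshift p) {x. block_rule p \<phi> n (shift w x) = None}
      = measure (bshift p) {x. block_rule p \<phi> n x = None}"
    using measure_bshift_shift_vimage[OF sets_block_rule_None] by (simp add: vimage_def)
  also have "\<dots> = prob_R_gt p \<phi> n"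
    unfolding prob_R_gt_def
  proof (rule measure_eq_AE)
    show "AE x in bshift p. x \<in> {x. block_rule p \<phi> n x = None} \<longleftrightarrow> x \<in> {x. enat n < coding_radius p \<phi> x}"
      using AE_block_rule_eq_phi_n[of p \<phi> n] by eventually_elim (auto simp: phi_n_def not_le)
  qed (fact sets_block_rule_None sets_coding_radius_gt[OF \<phi>])+
  finally show ?thesis .
qed

section \<open>The torus modeling\<close>

definition window :: "('d \<Rightarrow> int) \<Rightarrow> nat \<Rightarrow> ('d \<Rightarrow> int) set" where
  "window u0 N = {v. \<forall>i. u0 i + 1 \<le> v i \<and> v i \<le> u0 i + int N}"

definition periodic_extension :: "nat \<Rightarrow> (('d \<Rightarrow> int) \<Rightarrow> 'a) \<Rightarrow> (('d \<Rightarrow> int) \<Rightarrow> 'a)" where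
  "periodic_extension N xh = (\<lambda>v. xh (\<lambda>i. v i mod int N))"

lemma torus_model_eq_block_rule_shift:
  "torus_model p \<phi> n N xh = (\<lambda>u. block_rule p \<phi> n (shift (- u) (periodic_extension N xh)))"
  by (simp add: fun_eq_iff torus_model_def shift_def periodic_extension_def)

lemma torus_eq_PiE: "torus N = PiE UNIV (\<lambda>_. {0..<int N})"
  by (auto simp: torus_def PiE_iff)

lemma finite_torus: "finite (torus N :: ('d::finite \<Rightarrow> int) set)"
  by (simp add: torus_eq_PiE finite_PiE)

lemma card_torus: "card (torus N :: ('d::finite \<Rightarrow> int) set) = N ^ CARD('d)"
  by (simp add: torus_eq_PiE card_PiE)

lemma finite_window: "finite (window u0 N :: ('d::finite \<Rightarrow> int) set)"
proof -
  have "window u0 N = PiE UNIV (\<lambda>i. {u0 i + 1..u0 i + int N})"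
    by (auto simp: window_def PiE_iff)
  then show ?thesis by (simp add: finite_PiE)
qed

lemma window_nonempty_imp_pos: "v \<in> window u0 N \<Longrightarrow> N > 0"
  by (auto simp: window_def dest: spec[of _ undefined])

lemma bij_betw_window_torus:
  fixes u0 :: "'d \<Rightarrow> int"
  shows "bij_betw (\<lambda>v i. v i mod int N) (window u0 N) (torus N)"
proof (rule bij_betwI[where g = "\<lambda>t i. u0 i + 1 + (t i - u0 i - 1) mod int N"])
  show "(\<lambda>v i. v i mod int N) \<in> window u0 N \<rightarrow> torus N"
    by (auto simp: torus_def dest: window_nonempty_imp_pos)
  show "(\<lambda>t i. u0 i + 1 + (t i - u0 i - 1) mod int N) \<in> torus N \<rightarrow> window u0 N"
  proof
    fix t :: "'d \<Rightarrow> int" assume "t \<in> torus N"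
    then have "int N > 0" by (auto simp: torus_def dest: spec[of _ undefined])
    then have "0 \<le> (t i - u0 i - 1) mod int N \<and> (t i - u0 i - 1) mod int N < int N" for i
      by simp
    then show "(\<lambda>i. u0 i + 1 + (t i - u0 i - 1) mod int N) \<in> window u0 N"
      unfolding window_def by (smt (verit) mem_Collect_eq)
  qed
  show "(\<lambda>i. u0 i + 1 + (v i mod int N - u0 i - 1) mod int N) = v" if "v \<in> window u0 N" for v
  proof
    fix i
    have "u0 i + 1 \<le> v i \<and> v i \<le> u0 i + int N"
      using that by (simp add: window_def)
    have "(v i mod int N - u0 i - 1) mod int N = (v i - u0 i - 1) mod int N"
      using mod_diff_left_eq[of "v i" "int N" "u0 i + 1"] by (simp add: diff_diff_eq)
    also have "\<dots> = v i - u0 i - 1"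
      using \<open>u0 i + 1 \<le> v i \<and> v i \<le> u0 i + int N\<close> by (intro mod_pos_pos_trivial) linarith+
    finally show "u0 i + 1 + (v i mod int N - u0 i - 1) mod int N = v i" by simp
  qed
  show "(\<lambda>i. (u0 i + 1 + (t i - u0 i - 1) mod int N) mod int N) = t" if "t \<in> torus N" for t
    using that by (auto simp: torus_def fun_eq_iff mod_add_right_eq)
qed

lemma map_pmf_torus_window:
  fixes u0 :: "'d::finite \<Rightarrow> int" and p :: "'a pmf"
  shows "map_pmf (\<lambda>xh. restrict (periodic_extension N xh) (window u0 N)) (torus_pmf N p)
       = Pi_pmf (window u0 N) undefined (\<lambda>_. p)"
proof -
  \<comment> \<open>Pi_pmf_bij_betw needs h to map the complement of the window outside the torus.\<close>
  define h where "h v = (if v \<in> window u0 N then (\<lambda>i. v i mod int N) else (\<lambda>_. -1))" for v :: "'d \<Rightarrow> int"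
  have "bij_betw h (window u0 N) (torus N)"
    using bij_betw_window_torus by (rule bij_betw_cong[THEN iffD1, rotated]) (simp add: h_def)
  moreover have "h v \<notin> torus N" if "v \<notin> window u0 N" for v
    using that by (simp add: h_def torus_def)
  ultimately have "Pi_pmf (window u0 N) undefined (\<lambda>_. p) = map_pmf (\<lambda>g. g \<circ> h) (torus_pmf N p)"
    unfolding torus_pmf_def by (rule Pi_pmf_bij_betw[OF finite_window])
  also have "\<dots> = map_pmf (\<lambda>xh. restrict (periodic_extension N xh) (window u0 N)) (torus_pmf N p)"
  proof (rule map_pmf_cong[OF refl])
    fix g :: "('d \<Rightarrow> int) \<Rightarrow> 'a" assume "g \<in> set_pmf (torus_pmf N p)"
    then have "g x = undefined" if "x \<notin> torus N" for x
      using that set_Pi_pmf_subset[OF finite_torus, of N undefined "\<lambda>_. p"]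
      by (auto simp: torus_pmf_def)
    moreover have "(\<lambda>_. -1) \<notin> torus N" by (simp add: torus_def)
    ultimately show "g \<circ> h = restrict (periodic_extension N g) (window u0 N)"
      by (auto simp: h_def periodic_extension_def fun_eq_iff)
  qed
  finally show ?thesis ..
qed

lemma
  fixes p :: "'a::finite pmf"
    and \<phi> :: "(('d::finite \<Rightarrow> int) \<Rightarrow> 'a) \<Rightarrow> (('d \<Rightarrow> int) \<Rightarrow> 'b::finite)"
  assumes boxes_in_window: "\<And>s v. s \<in> S \<Longrightarrow> v \<in> box n \<Longrightarrow> (\<lambda>i. v i + s i) \<in> window u0 N"
  shows measurable_block_rule_translates:
      "(\<lambda>x. restrict (\<lambda>u. block_rule p \<phi> n (shift (- u) x)) S) \<in> bshift p \<rightarrow>\<^sub>M count_space UNIV"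
    and distr_block_rule_translates_eq_torus_model:
      "distr (bshift p) (count_space UNIV) (\<lambda>x. restrict (\<lambda>u. block_rule p \<phi> n (shift (- u) x)) S)
       = measure_pmf (map_pmf (\<lambda>xh. restrict (torus_model p \<phi> n N xh) S) (torus_pmf N p))"
proof -
  define H where "H y = restrict (\<lambda>u. block_rule p \<phi> n (shift (- u) y)) S" for y
  have H_local: "H (restrict y (window u0 N)) = H y" for y
    unfolding H_def using boxes_in_window
    by (intro restrict_ext block_rule_local) (auto simp: shift_def)
  have "(\<lambda>x. H (restrict x (window u0 N))) \<in> bshift p \<rightarrow>\<^sub>M count_space UNIV"
    by (rule measurable_compose[OF measurable_restrict_bshift[OF finite_window] measurable_count_space])
  then show "(\<lambda>x. restrict (\<lambda>u. block_rule p \<phi> n (shift (- u) x)) S) \<in> bshift p \<rightarrow>\<^sub>M count_space UNIV"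
    unfolding H_local unfolding H_def .
  have "map_pmf (\<lambda>xh. restrict (torus_model p \<phi> n N xh) S) (torus_pmf N p)
      = map_pmf (H \<circ> (\<lambda>xh. restrict (periodic_extension N xh) (window u0 N))) (torus_pmf N p)"
    unfolding o_def H_local by (simp add: H_def torus_model_eq_block_rule_shift)
  also have "\<dots> = map_pmf H (Pi_pmf (window u0 N) undefined (\<lambda>_. p))"
    by (subst map_pmf_compose) (simp add: map_pmf_torus_window)
  finally have "measure_pmf (map_pmf (\<lambda>xh. restrict (torus_model p \<phi> n N xh) S) (torus_pmf N p))
      = distr (bshift p) (count_space UNIV) (\<lambda>x. H (restrict x (window u0 N)))"
    by (simp add: distr_local_bshift[OF finite_window])
  then show "distr (bshift p) (count_space UNIV) (\<lambda>x. restrict (\<lambda>u. block_rule p \<phi> n (shift (- u) x)) S)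
       = measure_pmf (map_pmf (\<lambda>xh. restrict (torus_model p \<phi> n N xh) S) (torus_pmf N p))"
    unfolding H_local unfolding H_def by (rule sym)
qed

lemma prob_torus_model_None:
  fixes p :: "'a::finite pmf" and q :: "'b::finite pmf"
    and \<phi> :: "(('d::finite \<Rightarrow> int) \<Rightarrow> 'a) \<Rightarrow> (('d \<Rightarrow> int) \<Rightarrow> 'b)"
  assumes \<phi>: "\<phi> \<in> bshift p \<rightarrow>\<^sub>M bshift q" and N: "2 * n + 1 \<le> N"
  shows "measure_pmf.prob (torus_pmf N p) {xh. torus_model p \<phi> n N xh u = None} = prob_R_gt p \<phi> n"
proof -
  have "(\<lambda>i. v i + s i) \<in> window (\<lambda>i. u i - int n - 1) N" if "s \<in> {u}" "v \<in> box n" for s v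
    unfolding window_def mem_Collect_eq
  proof
    fix i
    have "\<bar>v i\<bar> \<le> int n" using that by (simp add: box_def)
    with that N show "u i - int n - 1 + 1 \<le> v i + s i \<and> v i + s i \<le> u i - int n - 1 + int N"
      by auto
  qed
  note law = distr_block_rule_translates_eq_torus_model[OF this, where p = p and \<phi> = \<phi>]
    and measurable = measurable_block_rule_translates[OF this, where p = p and \<phi> = \<phi>]
  have "measure_pmf.prob (torus_pmf N p) {xh. torus_model p \<phi> n N xh u = None}
      = measure_pmf.prob (map_pmf (\<lambda>xh. restrict (torus_model p \<phi> n N xh) {u}) (torus_pmf N p))
          {f. f u = None}"
    by (simp add: vimage_def)
  also have "\<dots> = measure (bshift p) {x. block_rule p \<phi> n (shift (- u) x) = None}"
    by (simp only: law[symmetric]) (subst measure_distr[OF measurable]; simp add: vimage_def)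
  also have "\<dots> = prob_R_gt p \<phi> n"
    by (rule measure_block_rule_shift_None[OF \<phi>])
  finally show ?thesis .
qed

lemma exp_Jc_eq:
  fixes p :: "'a::finite pmf" and q :: "'b::finite pmf"
    and \<phi> :: "(('d::finite \<Rightarrow> int) \<Rightarrow> 'a) \<Rightarrow> (('d \<Rightarrow> int) \<Rightarrow> 'b)"
  assumes \<phi>: "\<phi> \<in> bshift p \<rightarrow>\<^sub>M bshift q" and N: "2 * n + 1 \<le> N"
  shows "exp_Jc p \<phi> N n = real N ^ CARD('d) * prob_R_gt p \<phi> n"
proof -
  let ?J = "\<lambda>u. {xh. torus_model p \<phi> n N xh u = None}"
  have "real (card {u \<in> torus N. xh \<in> ?J u}) = (\<Sum>u\<in>torus N. indicator (?J u) xh)" for xh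
    by (simp add: indicator_def finite_torus Int_def conj_commute)
  then have "exp_Jc p \<phi> N n = measure_pmf.expectation (torus_pmf N p) (\<lambda>xh. \<Sum>u\<in>torus N. indicator (?J u) xh)"
    by (simp add: exp_Jc_def)
  also have "\<dots> = (\<Sum>u\<in>torus N. measure_pmf.prob (torus_pmf N p) (?J u))"
    by (subst Bochner_Integration.integral_sum)
       (auto intro!: integrable_real_indicator simp: less_top[symmetric] measure_pmf.emeasure_finite)
  also have "\<dots> = real N ^ CARD('d) * prob_R_gt p \<phi> n"
    by (simp add: prob_torus_model_None[OF \<phi> N] card_torus)
  finally show ?thesis .
qed

lemma measurable_count_space_countable_range:
  assumes "countable (f ` space M)" and "\<And>y. f -` {y} \<inter> space M \<in> sets M"
  shows "f \<in> M \<rightarrow>\<^sub>M count_space UNIV"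
proof (rule measurableI)
  fix A
  have "f -` A \<inter> space M = (\<Union>y\<in>A \<inter> f ` space M. f -` {y} \<inter> space M)"
    by auto
  also have "\<dots> \<in> sets M"
    using assms by (intro sets.countable_UN') auto
  finally show "f -` A \<inter> space M \<in> sets M" .
qed simp

lemma countable_image_pair:
  assumes "countable (f ` A)" and "countable (g ` A)"
  shows "countable ((\<lambda>x. (f x, g x)) ` A)"
proof -
  have "(\<lambda>x. (f x, g x)) ` A \<subseteq> f ` A \<times> g ` A"
    by auto
  then show ?thesis
    using assms by (blast intro: countable_subset)
qed

lemma measurable_pair_count_space_countable:
  assumes f: "f \<in> M \<rightarrow>\<^sub>M count_space UNIV" and g: "g \<in> M \<rightarrow>\<^sub>M count_space UNIV"
    and "countable (f ` space M)" and "countable (g ` space M)"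
  shows "(\<lambda>x. (f x, g x)) \<in> M \<rightarrow>\<^sub>M count_space UNIV"
proof (rule measurable_count_space_countable_range)
  show "countable ((\<lambda>x. (f x, g x)) ` space M)"
    using assms(3,4) by (rule countable_image_pair)
  fix y
  have "(\<lambda>x. (f x, g x)) -` {y} \<inter> space M = (f -` {fst y} \<inter> space M) \<inter> (g -` {snd y} \<inter> space M)"
    by (cases y) auto
  then show "(\<lambda>x. (f x, g x)) -` {y} \<inter> space M \<in> sets M"
    using measurable_sets[OF f] measurable_sets[OF g] by auto
qed

lemma (in prob_space) obtain_pmf_eq_distr:
  assumes "f \<in> M \<rightarrow>\<^sub>M count_space UNIV" and "countable (f ` space M)"
  obtains \<mu> where "measure_pmf \<mu> = distr M (count_space UNIV) f"
proof
  let ?D = "distr M (count_space UNIV) f"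
  interpret D: prob_space ?D
    using assms(1) by (rule prob_space_distr)
  have "AE y in ?D. y \<in> f ` space M"
    using assms(1) by (subst AE_distr_iff) auto
  then have "AE y in ?D. measure ?D {y} \<noteq> 0"
    using assms(2) by (subst D.AE_support_countable) auto
  then show "measure_pmf (Abs_pmf ?D) = ?D"
    by (intro Abs_pmf_inverse) (simp add: D.prob_space_axioms)
qed

lemma homomorphism_value_at:
  assumes "homomorphism p q \<phi>"
  shows "\<phi> (shift (- u) x) (\<lambda>_. 0) = \<phi> x u"
proof -
  have "\<phi> (shift (- u) x) = shift (- u) (\<phi> x)"
    using assms by (simp add: homomorphism_def)
  then show ?thesis by (simp add: shift_def)
qed

lemma translate_box_subset_neighbourhood:
  assumes "v \<in> box n"
  shows "(\<lambda>i. v i + s i) \<in> {w. \<forall>i. s i - int n \<le> w i \<and> w i \<le> s i + int n}"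
  unfolding mem_Collect_eq
proof
  fix i
  have "\<bar>v i\<bar> \<le> int n"
    using assms by (simp add: box_def)
  then show "s i - int n \<le> v i + s i \<and> v i + s i \<le> s i + int n"
    by auto
qed

lemma coupling_torus_model:
  fixes p :: "'a::finite pmf" and q :: "'b::finite pmf"
    and \<phi> :: "(('d::finite \<Rightarrow> int) \<Rightarrow> 'a) \<Rightarrow> (('d \<Rightarrow> int) \<Rightarrow> 'b)"
  assumes hom: "homomorphism p q \<phi>"
    and boxes: "(\<Union>s\<in>S. {v. \<forall>i. s i - int n \<le> v i \<and> v i \<le> s i + int n}) \<subseteq> window u0 N"
  shows "\<exists>lam :: ((('d \<Rightarrow> int) \<Rightarrow> 'b option) \<times> (('d \<Rightarrow> int) \<Rightarrow> 'b)) pmf.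
              map_pmf fst lam = map_pmf (\<lambda>xh. restrict (torus_model p \<phi> n N xh) S) (torus_pmf N p)
            \<and> map_pmf snd lam = Pi_pmf S undefined (\<lambda>_. q)
            \<and> (\<forall>u\<in>S. AE w in measure_pmf lam. (fst w u \<noteq> Some (snd w u)) \<longleftrightarrow> fst w u = None)"
proof -
  have \<phi>: "\<phi> \<in> bshift p \<rightarrow>\<^sub>M bshift q"
    using hom by (simp add: homomorphism_def)
  have boxes_in_window: "(\<lambda>i. v i + s i) \<in> window u0 N" if "s \<in> S" "v \<in> box n" for s v
    using boxes UN_I[OF that(1) translate_box_subset_neighbourhood[OF that(2)]] by (rule subsetD)
  have "S \<subseteq> window u0 N"
    using boxes_in_window[of _ "\<lambda>_. 0"] by (auto simp: box_def)
  then have S: "finite S"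
    using finite_window by (rule finite_subset)
  define model where "model x = restrict (\<lambda>u. block_rule p \<phi> n (shift (- u) x)) S" for x
  define G where "G x = (model x, restrict (\<phi> x) S)" for x
  have model: "model \<in> bshift p \<rightarrow>\<^sub>M count_space UNIV"
    unfolding model_def by (rule measurable_block_rule_translates[OF boxes_in_window])
  have restrict_\<phi>: "(\<lambda>x. restrict (\<phi> x) S) \<in> bshift p \<rightarrow>\<^sub>M count_space UNIV"
    by (rule measurable_compose[OF \<phi> measurable_restrict_bshift[OF S]])
  have "countable (model ` space (bshift p))" "countable ((\<lambda>x. restrict (\<phi> x) S) ` space (bshift p))"
    using S by (auto intro!: countable_finite finite_subset[OF _ finite_PiE[of S "\<lambda>_. UNIV"]]
        simp: model_def)
  then have G: "G \<in> bshift p \<rightarrow>\<^sub>M count_space UNIV" and "countable (G ` space (bshift p))"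
    unfolding G_def by (auto intro: measurable_pair_count_space_countable[OF model restrict_\<phi>]
        countable_image_pair)
  then obtain lam where lam: "measure_pmf lam = distr (bshift p) (count_space UNIV) G"
    using prob_space.obtain_pmf_eq_distr[OF prob_space_bshift] by blast
  have "measure_pmf (map_pmf fst lam) = distr (bshift p) (count_space UNIV) model"
    by (simp add: map_pmf_rep_eq lam distr_distr[OF measurable_count_space G] o_def G_def)
  also have "\<dots> = measure_pmf (map_pmf (\<lambda>xh. restrict (torus_model p \<phi> n N xh) S) (torus_pmf N p))"
    unfolding model_def by (rule distr_block_rule_translates_eq_torus_model[OF boxes_in_window])
  finally have first: "map_pmf fst lam = map_pmf (\<lambda>xh. restrict (torus_model p \<phi> n N xh) S) (torus_pmf N p)"
    by (simp only: measure_pmf_inject)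
  have "measure_pmf (map_pmf snd lam) = distr (distr (bshift p) (bshift q) \<phi>) (count_space UNIV) (\<lambda>y. restrict y S)"
    by (simp add: map_pmf_rep_eq lam distr_distr[OF measurable_count_space G]
        distr_distr[OF measurable_restrict_bshift[OF S] \<phi>] o_def G_def)
  also have "\<dots> = measure_pmf (Pi_pmf S undefined (\<lambda>_. q))"
    using hom by (simp add: homomorphism_def distr_restrict_bshift[OF S])
  finally have second: "map_pmf snd lam = Pi_pmf S undefined (\<lambda>_. q)"
    by (simp only: measure_pmf_inject)
  have "AE w in measure_pmf lam. (fst w u \<noteq> Some (snd w u)) \<longleftrightarrow> fst w u = None" if "u \<in> S" for u
  proof -
    have "AE x in bshift p. block_rule p \<phi> n (shift (- u) x) = phi_n p \<phi> n (shift (- u) x)"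
      by (rule AE_bshift_shift[OF AE_block_rule_eq_phi_n])
    then have "AE x in bshift p. (fst (G x) u \<noteq> Some (snd (G x) u)) \<longleftrightarrow> fst (G x) u = None"
      by eventually_elim
         (use that in \<open>simp add: G_def model_def phi_n_def homomorphism_value_at[OF hom]\<close>)
    then show ?thesis
      unfolding lam by (subst AE_distr_iff[OF G]) auto
  qed
  with first second show ?thesis by blast
qed

section \<open>A slowly vanishing scale\<close>

lemma obtain_antimono_majorant:
  fixes f :: "nat \<Rightarrow> real"
  assumes "f \<longlonglongrightarrow> 0"
  obtains g where "antimono g" "\<And>n. 0 \<le> g n" "\<And>n k. n \<le> k \<Longrightarrow> f k \<le> g n" "g \<longlonglongrightarrow> 0"
proof
  define g where "g n = (SUP k\<in>{n..}. \<bar>f k\<bar>)" for n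
  obtain K where K: "\<And>n. \<bar>f n\<bar> \<le> K"
    using convergent_imp_Bseq[OF convergentI[OF assms]] by (auto simp: Bseq_def)
  then have bdd: "bdd_above ((\<lambda>k. \<bar>f k\<bar>) ` A)" for A
    by (intro bdd_aboveI) auto
  show "f k \<le> g n" if "n \<le> k" for n k
    using that by (auto simp: g_def intro!: cSUP_upper2[OF bdd])
  show "antimono g"
    by (intro antimonoI) (auto simp: g_def intro!: cSUP_subset_mono bdd)
  show nonneg: "0 \<le> g n" for n
    unfolding g_def by (rule cSUP_upper2[OF bdd, of n]) auto
  show "g \<longlonglongrightarrow> 0"
  proof (rule LIMSEQ_I)
    fix r :: real assume "0 < r"
    then obtain n0 where n0: "\<And>k. n0 \<le> k \<Longrightarrow> \<bar>f k\<bar> < r / 2"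
      using LIMSEQ_D[OF assms, of "r / 2"] by auto
    have "g n \<le> r / 2" if "n0 \<le> n" for n
      unfolding g_def
    proof (rule cSUP_least)
      show "\<bar>f k\<bar> \<le> r / 2" if "k \<in> {n..}" for k
        using n0[of k] that \<open>n0 \<le> n\<close> by simp
    qed simp
    then have "norm (g n - 0) < r" if "n0 \<le> n" for n
      using that \<open>0 < r\<close> nonneg[of n] by fastforce
    then show "\<exists>n0. \<forall>n\<ge>n0. norm (g n - 0) < r"
      by blast
  qed
qed

lemma floor_scale_bounds:
  fixes \<delta> :: real and N :: nat
  assumes N: "4 \<le> N" and \<delta>: "2 / sqrt (1 + real N) \<le> \<delta>"
  shows "sqrt (real N) \<le> \<delta> * real N" and "\<delta> * real N / 2 \<le> real (nat \<lfloor>\<delta> * real N\<rfloor>)"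
proof -
  have "sqrt (real N) * sqrt (1 + real N) = sqrt (real N * (1 + real N))"
    by (simp add: real_sqrt_mult)
  also have "\<dots> \<le> sqrt ((2 * real N)\<^sup>2)"
    using N by (intro real_sqrt_le_mono) (simp add: power2_eq_square algebra_simps)
  also have "\<dots> = 2 * real N"
    by (simp only: real_sqrt_abs)
  finally have "sqrt (real N) \<le> 2 / sqrt (1 + real N) * real N"
    by (simp add: field_simps)
  also have "\<dots> \<le> \<delta> * real N"
    using \<delta> by (intro mult_right_mono) auto
  finally show sqrt_le: "sqrt (real N) \<le> \<delta> * real N" .
  have "2 \<le> sqrt (real N)"
    using real_sqrt_le_mono[of 4 "real N"] N by simp
  then show "\<delta> * real N / 2 \<le> real (nat \<lfloor>\<delta> * real N\<rfloor>)"
    using sqrt_le by linarith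
qed

lemma power_scale_bound:
  fixes c \<delta> \<gamma> P x N :: real
  assumes "0 < c" "0 < N" "0 < \<delta>" "\<delta> * N / 2 \<le> x" "0 \<le> \<gamma>" "\<gamma> powr (1 / (2 * c)) \<le> \<delta>"
    and "0 \<le> P" "P * x powr c \<le> \<gamma>"
  shows "P * N powr c \<le> 2 powr c * sqrt \<gamma>"
proof -
  have x: "0 < x"
    using assms(2-4) by (smt (verit) divide_pos_pos mult_pos_pos)
  have "P * N powr c = (P * x powr c) * (N / x) powr c"
    using x assms(2) by (simp add: powr_divide)
  also have "\<dots> \<le> \<gamma> * (2 / \<delta>) powr c"
    using assms x by (intro mult_mono powr_mono2) (auto simp: field_simps)
  also have "\<dots> = 2 powr c * (\<gamma> / \<delta> powr c)"
    using assms by (simp add: powr_divide)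
  also have "\<gamma> / \<delta> powr c \<le> sqrt \<gamma>"
  proof -
    have "sqrt \<gamma> = (\<gamma> powr (1 / (2 * c))) powr c"
      using assms(1,5) by (simp add: powr_powr powr_half_sqrt)
    also have "\<dots> \<le> \<delta> powr c"
      using assms by (intro powr_mono2) auto
    finally have "sqrt \<gamma> \<le> \<delta> powr c" .
    then have "sqrt \<gamma> * sqrt \<gamma> \<le> sqrt \<gamma> * \<delta> powr c"
      using assms(5) by (intro mult_left_mono) auto
    then show ?thesis
      using assms(3,5) by (simp add: divide_le_eq)
  qed
  finally show ?thesis by simp
qed

lemma scaled_tail_bound:
  fixes P :: "nat \<Rightarrow> real" and c \<gamma> \<delta> :: real
  assumes "0 < c" and P: "\<And>n. 0 \<le> P n" and "0 \<le> \<gamma>" and N: "4 \<le> N"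
    and major: "\<And>k. nat \<lfloor>sqrt (real N)\<rfloor> \<le> k \<Longrightarrow> P k * real k powr c \<le> \<gamma>"
    and \<delta>: "2 / sqrt (1 + real N) \<le> \<delta>" and "\<gamma> powr (1 / (2 * c)) \<le> \<delta>"
  shows "P (nat \<lfloor>\<delta> * real N\<rfloor>) * real N powr c \<le> 2 powr c * sqrt \<gamma>"
proof (rule power_scale_bound)
  note bounds = floor_scale_bounds[OF N \<delta>]
  have "nat \<lfloor>sqrt (real N)\<rfloor> \<le> nat \<lfloor>\<delta> * real N\<rfloor>"
    using bounds(1) by (intro nat_mono floor_mono)
  then show "P (nat \<lfloor>\<delta> * real N\<rfloor>) * real (nat \<lfloor>\<delta> * real N\<rfloor>) powr c \<le> \<gamma>"
    by (rule major)
  show "0 < \<delta>"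
    using \<delta> by (smt (verit) divide_pos_pos real_sqrt_gt_zero of_nat_0_le_iff)
  show "\<delta> * real N / 2 \<le> real (nat \<lfloor>\<delta> * real N\<rfloor>)"
    by (fact bounds(2))
qed (use assms in auto)

lemma filterlim_nat_floor_sqrt: "filterlim (\<lambda>N. nat \<lfloor>sqrt (real N)\<rfloor>) sequentially sequentially"
  by (rule filterlim_compose[OF filterlim_nat_sequentially filterlim_compose[OF filterlim_floor_sequentially
        filterlim_compose[OF sqrt_at_top filterlim_real_sequentially]]])

lemma LIMSEQ_const_div_sqrt: "(\<lambda>N. a / sqrt (1 + real N)) \<longlonglongrightarrow> 0"
proof (rule tendsto_divide_0[OF tendsto_const filterlim_at_top_imp_at_infinity])
  show "filterlim (\<lambda>N. sqrt (1 + real N)) at_top sequentially"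
    by (rule filterlim_compose[OF sqrt_at_top filterlim_tendsto_add_at_top[OF tendsto_const filterlim_real_sequentially]])
qed

lemma exists_slow_scale:
  fixes P :: "nat \<Rightarrow> real" and c :: real
  assumes c: "0 < c" and P: "\<And>n. 0 \<le> P n" and lim: "(\<lambda>n. P n * real n powr c) \<longlonglongrightarrow> 0"
  shows "\<exists>\<delta>::nat \<Rightarrow> real. antimono \<delta> \<and> (\<forall>N. 0 < \<delta> N) \<and> \<delta> \<longlonglongrightarrow> 0 \<and>
           (\<lambda>N. P (nat \<lfloor>\<delta> N * real N\<rfloor>) * real N powr c) \<longlonglongrightarrow> 0"
proof -
  obtain g where g_antimono: "antimono g" and g_nonneg: "\<And>n. 0 \<le> g n"
    and g_major: "\<And>n k. n \<le> k \<Longrightarrow> P k * real k powr c \<le> g n" and g_lim: "g \<longlonglongrightarrow> 0"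
    using obtain_antimono_majorant[OF lim] by blast
  define s where "s N = nat \<lfloor>sqrt (real N)\<rfloor>" for N
  have gs_lim: "(\<lambda>N. g (s N)) \<longlonglongrightarrow> 0"
    unfolding s_def by (rule filterlim_compose[OF g_lim filterlim_nat_floor_sqrt])
  \<comment> \<open>The second term forces nat (floor (delta N * N)) \<ge> s N, the first bounds
      delta N ^ (-c) by g (s N) ^ (-1/2).\<close>
  define \<delta> where "\<delta> N = max (g (s N) powr (1 / (2 * c))) (2 / sqrt (1 + real N))" for N
  have "antimono \<delta>"
  proof (rule antimonoI)
    fix N N' :: nat assume "N \<le> N'"
    then have "s N \<le> s N'"
      unfolding s_def by (intro nat_mono floor_mono real_sqrt_le_mono) simp
    then have "g (s N') \<le> g (s N)"
      by (rule antimonoD[OF g_antimono])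
    then have "g (s N') powr (1 / (2 * c)) \<le> g (s N) powr (1 / (2 * c))"
      using g_nonneg c by (intro powr_mono2) auto
    moreover have "2 / sqrt (1 + real N') \<le> 2 / sqrt (1 + real N)"
      using \<open>N \<le> N'\<close> by (intro divide_left_mono real_sqrt_le_mono mult_pos_pos) auto
    ultimately show "\<delta> N' \<le> \<delta> N"
      unfolding \<delta>_def by (rule max.mono)
  qed
  moreover have "0 < \<delta> N" for N
    by (simp add: \<delta>_def less_max_iff_disj)
  moreover have "\<delta> \<longlonglongrightarrow> 0"
  proof -
    have "(\<lambda>N. g (s N) powr (1 / (2 * c))) \<longlonglongrightarrow> 0"
      using g_nonneg c by (intro tendsto_zero_powrI[OF gs_lim tendsto_const]) auto
    from tendsto_max[OF this LIMSEQ_const_div_sqrt] show ?thesis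
      by (simp add: \<delta>_def[abs_def])
  qed
  moreover have "(\<lambda>N. P (nat \<lfloor>\<delta> N * real N\<rfloor>) * real N powr c) \<longlonglongrightarrow> 0"
  proof (rule tendsto_sandwich[OF _ _ tendsto_const])
    show "\<forall>\<^sub>F N in sequentially. 0 \<le> P (nat \<lfloor>\<delta> N * real N\<rfloor>) * real N powr c"
      using P by simp
    show "\<forall>\<^sub>F N in sequentially. P (nat \<lfloor>\<delta> N * real N\<rfloor>) * real N powr c \<le> 2 powr c * sqrt (g (s N))"
      using eventually_ge_at_top[of 4]
      by eventually_elim (rule scaled_tail_bound[OF c P g_nonneg]; simp add: g_major s_def \<delta>_def)
    have "(\<lambda>N. 2 powr c * sqrt (g (s N))) \<longlonglongrightarrow> 2 powr c * sqrt 0"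
      by (intro tendsto_intros gs_lim)
    then show "(\<lambda>N. 2 powr c * sqrt (g (s N))) \<longlonglongrightarrow> 0" by simp
  qed
  ultimately show ?thesis by blast
qed

lemma LIMSEQ_mult_powr_if_smallo:
  fixes P :: "nat \<Rightarrow> real"
  assumes "P \<in> o(\<lambda>n. real n powr (- c))"
  shows "(\<lambda>n. P n * real n powr c) \<longlonglongrightarrow> 0"
proof -
  have "(\<lambda>n. P n / real n powr (- c)) \<longlonglongrightarrow> 0"
    using smalloD_tendsto[OF assms] .
  moreover have "\<forall>\<^sub>F n in sequentially. P n / real n powr (- c) = P n * real n powr c"
    by (simp add: powr_minus divide_inverse)
  ultimately show ?thesis
    by (rule Lim_transform_eventually)
qed

lemma exp_Jc_little_o:
  fixes p :: "'a::finite pmf" and q :: "'b::finite pmf"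
    and \<phi> :: "(('d::finite \<Rightarrow> int) \<Rightarrow> 'a) \<Rightarrow> (('d \<Rightarrow> int) \<Rightarrow> 'b)"
  assumes \<phi>: "\<phi> \<in> bshift p \<rightarrow>\<^sub>M bshift q" and \<alpha>: "0 < \<alpha>"
    and tail: "(\<lambda>n. prob_R_gt p \<phi> n) \<in> o(\<lambda>n. real n powr (- (real CARD('d) * \<alpha>)))"
  shows "\<exists>\<delta>::nat \<Rightarrow> real. antimono \<delta> \<and> (\<forall>N. \<delta> N > 0) \<and> \<delta> \<longlonglongrightarrow> 0 \<and>
           (\<lambda>N. exp_Jc p \<phi> N (nat \<lfloor>\<delta> N * real N\<rfloor>)) \<in> o(\<lambda>N. real N powr (real CARD('d) * (1 - \<alpha>)))"
proof -
  define c where "c = real CARD('d) * \<alpha>"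
  have c: "0 < c"
    using \<alpha> by (simp add: c_def)
  have tail_lim: "(\<lambda>n. prob_R_gt p \<phi> n * real n powr c) \<longlonglongrightarrow> 0"
    using tail unfolding c_def by (rule LIMSEQ_mult_powr_if_smallo)
  have "\<exists>\<delta>::nat \<Rightarrow> real. antimono \<delta> \<and> (\<forall>N. 0 < \<delta> N) \<and> \<delta> \<longlonglongrightarrow> 0 \<and>
      (\<lambda>N. prob_R_gt p \<phi> (nat \<lfloor>\<delta> N * real N\<rfloor>) * real N powr c) \<longlonglongrightarrow> 0"
    by (rule exists_slow_scale[where P = "prob_R_gt p \<phi>", OF c _ tail_lim]) (simp add: prob_R_gt_def)
  then obtain \<delta> where \<delta>: "antimono \<delta>" "\<forall>N. 0 < \<delta> N" "\<delta> \<longlonglongrightarrow> 0"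
    and scaled_lim: "(\<lambda>N. prob_R_gt p \<phi> (nat \<lfloor>\<delta> N * real N\<rfloor>) * real N powr c) \<longlonglongrightarrow> 0"
    by blast
  have "\<forall>\<^sub>F N in sequentially. \<delta> N < 1 / 3"
    by (rule order_tendstoD(2)[OF \<delta>(3)]) simp
  then have "\<forall>\<^sub>F N in sequentially. prob_R_gt p \<phi> (nat \<lfloor>\<delta> N * real N\<rfloor>) * real N powr c
      = exp_Jc p \<phi> N (nat \<lfloor>\<delta> N * real N\<rfloor>) / real N powr (real CARD('d) * (1 - \<alpha>))"
    using eventually_ge_at_top[of 3]
  proof eventually_elim
    case (elim N)
    have "\<delta> N * real N \<le> real N / 3"
      using mult_right_mono[of "\<delta> N" "1 / 3" "real N"] elim(1) by simp
    then have "2 * nat \<lfloor>\<delta> N * real N\<rfloor> + 1 \<le> N"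
      using elim(2) \<delta>(2) by linarith
    then have "exp_Jc p \<phi> N (nat \<lfloor>\<delta> N * real N\<rfloor>)
        = real N ^ CARD('d) * prob_R_gt p \<phi> (nat \<lfloor>\<delta> N * real N\<rfloor>)"
      by (rule exp_Jc_eq[OF \<phi>])
    moreover have "real N ^ CARD('d) / real N powr (real CARD('d) * (1 - \<alpha>)) = real N powr c"
      using elim(2) by (simp add: powr_realpow[symmetric] powr_diff[symmetric] c_def algebra_simps)
    ultimately show ?case
      by (metis mult.commute times_divide_eq_left)
  qed
  with scaled_lim have "(\<lambda>N. exp_Jc p \<phi> N (nat \<lfloor>\<delta> N * real N\<rfloor>) / real N powr (real CARD('d) * (1 - \<alpha>)))
      \<longlonglongrightarrow> 0"
    by (rule Lim_transform_eventually)
  then have "(\<lambda>N. exp_Jc p \<phi> N (nat \<lfloor>\<delta> N * real N\<rfloor>)) \<in> o(\<lambda>N. real N powr (real CARD('d) * (1 - \<alpha>)))"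
    by (rule smalloI_tendsto) (use eventually_gt_at_top[of 0] in \<open>auto elim: eventually_mono\<close>)
  with \<delta> show ?thesis by blast
qed

theorem proposition4:
  fixes p :: "'a::finite pmf" and q :: "'b::finite pmf"
    and \<phi> :: "(('d::finite \<Rightarrow> int) \<Rightarrow> 'a) \<Rightarrow> (('d \<Rightarrow> int) \<Rightarrow> 'b)"
  assumes hom: "homomorphism p q \<phi>"
    and fin: "finitary p \<phi>"
  shows
    "(\<forall>n N. 2 * n + 1 \<le> N \<longrightarrow>
        (\<forall>u\<in>torus N. measure_pmf.prob (torus_pmf N p) {xh. torus_model p \<phi> n N xh u = None}
                      = prob_R_gt p \<phi> n) \<and>
        exp_Jc p \<phi> N n = real N ^ CARD('d) * prob_R_gt p \<phi> n)
     \<and> (\<forall>\<alpha>::real. \<alpha> > 0 \<longrightarrow>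
          (\<lambda>n. prob_R_gt p \<phi> n) \<in> o(\<lambda>n. real n powr (- (real CARD('d) * \<alpha>))) \<longrightarrow>
          (\<exists>\<delta>::nat \<Rightarrow> real. antimono \<delta> \<and> (\<forall>N. \<delta> N > 0) \<and> \<delta> \<longlonglongrightarrow> 0 \<and>
             (\<lambda>N. exp_Jc p \<phi> N (nat \<lfloor>\<delta> N * real N\<rfloor>))
               \<in> o(\<lambda>N. real N powr (real CARD('d) * (1 - \<alpha>)))))
     \<and> (\<forall>n N (S :: ('d \<Rightarrow> int) set) (u0 :: 'd \<Rightarrow> int). 2 * n + 1 \<le> N \<longrightarrow>
          (\<Union>s\<in>S. {v. \<forall>i. s i - int n \<le> v i \<and> v i \<le> s i + int n})
             \<subseteq> {v. \<forall>i. u0 i + 1 \<le> v i \<and> v i \<le> u0 i + int N} \<longrightarrow>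
          (\<exists>lam :: ((('d \<Rightarrow> int) \<Rightarrow> 'b option) \<times> (('d \<Rightarrow> int) \<Rightarrow> 'b)) pmf.
              map_pmf fst lam = map_pmf (\<lambda>xh. restrict (torus_model p \<phi> n N xh) S) (torus_pmf N p)
            \<and> map_pmf snd lam = Pi_pmf S undefined (\<lambda>_. q)
            \<and> (\<forall>u\<in>S. AE w in measure_pmf lam. (fst w u \<noteq> Some (snd w u)) \<longleftrightarrow> fst w u = None)))"
proof -
  have \<phi>: "\<phi> \<in> bshift p \<rightarrow>\<^sub>M bshift q"
    using hom by (simp add: homomorphism_def)
  show ?thesis
    by (intro conjI allI impI ballI prob_torus_model_None[OF \<phi>] exp_Jc_eq[OF \<phi>]
        exp_Jc_little_o[OF \<phi>] coupling_torus_model[OF hom]) (simp_all add: window_def)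
qed

end
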